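(* Let $I$ be a finite tree. An expression $\Sigma_{i_1}\Sigma_{i_2}\cdots\Sigma_{i_r}$ for a morphism of $R_0(I)$ is reduced if and only if between any two occurrences of the same letter $i$ in the word $i_1i_2\cdots i_r$ there is an occurrence of some $j$ adjacent to $i$ in $I$.
   Context: Let $I$ be a finite tree. $\mathrm{Quiv}(I)$ is the set of orientations of $I$. For $\Gamma\in\mathrm{Quiv}(I)$ and a source or sink $i$ of $\Gamma$, $s_i\Gamma$ is the orientation obtained by reversing all arrows at $i$. The groupoid $R_0(I)$ has object set $\mathrm{Quiv}(I)$ and is generated by elementary isomorphisms $\Sigma_i:\Gamma\to s_i\Gamma$ (for each $\Gamma$ and each source or sink $i$ of $\Gamma$) subject to the relations, whenever both sides are defined: (R1) $\Sigma_i^2=1$; (R2) $\Sigma_i\Sigma_j=\Sigma_j\Sigma_i$ when $i,j$ are not adjacent. Composition is right-to-left. An expression for a morphism $\Sigma:\Gamma\to\Gamma'$ is a composable word $\Sigma_{i_1}\cdots\Sigma_{i_r}$ equal to $\Sigma$ (so $i_r$ is a source or sink of $\Gamma$, $i_{r-1}$ a source or sink of $s_{i_r}\Gamma$, etc.). The length $\ell(\Sigma)$ is the minimal length of an expression for $\Sigma$, and an expression of length $\ell(\Sigma)$ is called reduced. *)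

theory Defs
  imports Main
begin

definition is_cycle :: "'v set \<Rightarrow> ('v \<Rightarrow> 'v \<Rightarrow> bool) \<Rightarrow> 'v list \<Rightarrow> bool" where
  "is_cycle V adj p \<longleftrightarrow> length p \<ge> 3 \<and> distinct p \<and> set p \<subseteq> V \<and>
     (\<forall>k. Suc k < length p \<longrightarrow> adj (p ! k) (p ! Suc k)) \<and> adj (last p) (hd p)"

definition finite_tree :: "'v set \<Rightarrow> ('v \<Rightarrow> 'v \<Rightarrow> bool) \<Rightarrow> bool" where
  "finite_tree V adj \<longleftrightarrow> finite V \<and> V \<noteq> {} \<and>
     (\<forall>i j. adj i j \<longrightarrow> i \<in> V \<and> j \<in> V) \<and>
     (\<forall>i j. adj i j \<longrightarrow> adj j i) \<and> (\<forall>i. \<not> adj i i) \<and>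
     (\<forall>i\<in>V. \<forall>j\<in>V. adj\<^sup>*\<^sup>* i j) \<and>
     (\<nexists>p. is_cycle V adj p)"

text \<open>Orientations of I (elements of Quiv(I)): a set of arrows (a,b) meaning a \<rightarrow> b,
  containing exactly one orientation of each edge.\<close>

definition orientation :: "('v \<Rightarrow> 'v \<Rightarrow> bool) \<Rightarrow> ('v \<times> 'v) set \<Rightarrow> bool" where
  "orientation adj G \<longleftrightarrow> (\<forall>a b. (a, b) \<in> G \<longrightarrow> adj a b) \<and>
     (\<forall>a b. adj a b \<longrightarrow> ((a, b) \<in> G \<longleftrightarrow> (b, a) \<notin> G))"

definition is_source :: "'v set \<Rightarrow> ('v \<times> 'v) set \<Rightarrow> 'v \<Rightarrow> bool" where
  "is_source V G i \<longleftrightarrow> i \<in> V \<and> (\<forall>j. (j, i) \<notin> G)"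

definition is_sink :: "'v set \<Rightarrow> ('v \<times> 'v) set \<Rightarrow> 'v \<Rightarrow> bool" where
  "is_sink V G i \<longleftrightarrow> i \<in> V \<and> (\<forall>j. (i, j) \<notin> G)"

definition reflect :: "'v \<Rightarrow> ('v \<times> 'v) set \<Rightarrow> ('v \<times> 'v) set" where
  "reflect i G = {(a, b). ((a, b) \<in> G \<and> a \<noteq> i \<and> b \<noteq> i) \<or> ((b, a) \<in> G \<and> (a = i \<or> b = i))}"

fun run :: "'v set \<Rightarrow> ('v \<times> 'v) set \<Rightarrow> 'v list \<Rightarrow> ('v \<times> 'v) set option" where
  "run V G [] = Some G"
| "run V G (i # is) =
     (if is_source V G i \<or> is_sink V G i then run V (reflect i G) is else None)"

text \<open>A word [i_1,...,i_r] denotes the expression \<Sigma>_{i_1} ... \<Sigma>_{i_r}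
  (composition right to left, so i_r is applied first). It is an expression
  starting at G iff it is composable.\<close>
definition composable :: "'v set \<Rightarrow> ('v \<times> 'v) set \<Rightarrow> 'v list \<Rightarrow> bool" where
  "composable V G w \<longleftrightarrow> run V G (rev w) \<noteq> None"

inductive rel_step :: "'v set \<Rightarrow> ('v \<Rightarrow> 'v \<Rightarrow> bool) \<Rightarrow> ('v \<times> 'v) set \<Rightarrow> 'v list \<Rightarrow> 'v list \<Rightarrow> bool"
  for V adj G where
  R1: "composable V G (u @ [i, i] @ v) \<Longrightarrow> composable V G (u @ v) \<Longrightarrow>
         rel_step V adj G (u @ [i, i] @ v) (u @ v)"
| R2: "\<not> adj i j \<Longrightarrow> composable V G (u @ [i, j] @ v) \<Longrightarrow> composable V G (u @ [j, i] @ v) \<Longrightarrow>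
         rel_step V adj G (u @ [i, j] @ v) (u @ [j, i] @ v)"

definition same_morphism :: "'v set \<Rightarrow> ('v \<Rightarrow> 'v \<Rightarrow> bool) \<Rightarrow> ('v \<times> 'v) set \<Rightarrow> 'v list \<Rightarrow> 'v list \<Rightarrow> bool" where
  "same_morphism V adj G = (\<lambda>x y. rel_step V adj G x y \<or> rel_step V adj G y x)\<^sup>*\<^sup>*"

definition reduced :: "'v set \<Rightarrow> ('v \<Rightarrow> 'v \<Rightarrow> bool) \<Rightarrow> ('v \<times> 'v) set \<Rightarrow> 'v list \<Rightarrow> bool" where
  "reduced V adj G w \<longleftrightarrow> composable V G w \<and>
     (\<forall>w'. composable V G w' \<longrightarrow> same_morphism V adj G w w' \<longrightarrow> length w \<le> length w')"

end

(*
  If two occurrences of i have no neighbour of i between them (and, choosing them innermost,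
  no further i), the second one commutes by (R2) past everything in between and then cancels
  against the first by (R1), so the word is not reduced; reflections at non-adjacent vertices
  commute and reflecting twice is the identity, so every intermediate word stays composable.

  Conversely, each letter s acts on words modulo commutation of non-adjacent letters: it
  cancels against an occurrence of s that can be commuted to the front, and is prepended
  otherwise. This action respects (R1) and (R2) and lengthens a word by at most one letter,
  so the image of the empty word under an expression depends, up to commutation, only on the
  morphism, and is no longer than the expression. A word with the separation property is its
  own image, hence no expression of the same morphism is shorter.
*)
theory Submission
  imports Defs "HOL-Library.Multiset"
begin

definition closed_nbhd :: "('v \<Rightarrow> 'v \<Rightarrow> bool) \<Rightarrow> 'v \<Rightarrow> 'v \<Rightarrow> bool" where
  "closed_nbhd adj c x \<longleftrightarrow> x = c \<or> adj c x"

lemma closed_nbhd_refl [simp]: "closed_nbhd adj c c"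
  by (simp add: closed_nbhd_def)

lemma closed_nbhd_commute: "symp adj \<Longrightarrow> closed_nbhd adj c x \<longleftrightarrow> closed_nbhd adj x c"
  by (auto simp: closed_nbhd_def dest: sympD)

definition exposed :: "('v \<Rightarrow> 'v \<Rightarrow> bool) \<Rightarrow> 'v \<Rightarrow> 'v list \<Rightarrow> bool" where
  "exposed adj s w \<longleftrightarrow> (\<exists>L. filter (closed_nbhd adj s) w = s # L)"

lemma exposed_iff_split:
  "exposed adj s w \<longleftrightarrow> (\<exists>us vs. w = us @ s # vs \<and> (\<forall>u\<in>set us. \<not> closed_nbhd adj s u))"
  by (auto simp: exposed_def filter_eq_Cons_iff)

lemma exposed_Cons_self [simp]: "exposed adj s (s # w)"
  by (simp add: exposed_def)

fun separated :: "('v \<Rightarrow> 'v \<Rightarrow> bool) \<Rightarrow> 'v list \<Rightarrow> bool" where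
  "separated adj [] \<longleftrightarrow> True"
| "separated adj (s # w) \<longleftrightarrow> \<not> exposed adj s w \<and> separated adj w"

lemma separated_appendD: "separated adj (us @ vs) \<Longrightarrow> separated adj vs"
  by (induction us) auto

lemma not_exposed_iff_nth:
  assumes "symp adj"
  shows "\<not> exposed adj s w \<longleftrightarrow> (\<forall>q<length w. w ! q = s \<longrightarrow> (\<exists>r<q. adj (w ! r) s))"
proof
  assume "\<not> exposed adj s w"
  show "\<forall>q<length w. w ! q = s \<longrightarrow> (\<exists>r<q. adj (w ! r) s)"
  proof (intro allI impI)
    fix q assume q: "q < length w" "w ! q = s"
    then have "filter (closed_nbhd adj s) w \<noteq> []"
      by (metis closed_nbhd_refl filter_empty_conv nth_mem)
    then obtain h L where hL: "filter (closed_nbhd adj s) w = h # L"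
      by (cases "filter (closed_nbhd adj s) w") auto
    then obtain us vs where w: "w = us @ h # vs" and us: "\<forall>u\<in>set us. \<not> closed_nbhd adj s u"
      and h: "closed_nbhd adj s h"
      by (auto simp: filter_eq_Cons_iff)
    have "h \<noteq> s"
      using hL \<open>\<not> exposed adj s w\<close> by (auto simp: exposed_def)
    have "\<not> q < length us"
    proof
      assume "q < length us"
      then have "s \<in> set us"
        using q w by (metis nth_append nth_mem)
      with us show False
        by (meson closed_nbhd_refl)
    qed
    moreover have "q \<noteq> length us"
      using q w \<open>h \<noteq> s\<close> by auto
    moreover have "adj (w ! length us) s"
      using w h \<open>h \<noteq> s\<close> assms by (auto simp: closed_nbhd_def dest: sympD)
    ultimately show "\<exists>r<q. adj (w ! r) s"
      by (intro exI[of _ "length us"]) auto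
  qed
next
  assume nth: "\<forall>q<length w. w ! q = s \<longrightarrow> (\<exists>r<q. adj (w ! r) s)"
  show "\<not> exposed adj s w"
  proof
    assume "exposed adj s w"
    then obtain us vs where w: "w = us @ s # vs" and us: "\<forall>u\<in>set us. \<not> closed_nbhd adj s u"
      by (auto simp: exposed_iff_split)
    then obtain r where "r < length us" "adj (w ! r) s"
      using nth[rule_format, of "length us"] by auto
    then show False
      using w us assms by (auto simp: closed_nbhd_def nth_append dest: sympD)
  qed
qed

lemma between_nth_Cons_iff:
  "(\<forall>p q. p < q \<and> q < length (s # w) \<and> (s # w) ! p = (s # w) ! q \<longrightarrow>
      (\<exists>r. p < r \<and> r < q \<and> R ((s # w) ! r) ((s # w) ! p))) \<longleftrightarrow>
    (\<forall>q<length w. w ! q = s \<longrightarrow> (\<exists>r<q. R (w ! r) s)) \<and>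
    (\<forall>p q. p < q \<and> q < length w \<and> w ! p = w ! q \<longrightarrow> (\<exists>r. p < r \<and> r < q \<and> R (w ! r) (w ! p)))"
  (is "?L \<longleftrightarrow> ?R1 \<and> ?R2")
proof (intro iffI conjI allI impI)
  fix q assume L: ?L and q: "q < length w" "w ! q = s"
  obtain r where "0 < r" "r < Suc q" "R ((s # w) ! r) s"
    using L[rule_format, of 0 "Suc q"] q by auto
  then show "\<exists>r<q. R (w ! r) s"
    by (cases r) auto
next
  fix p q assume L: ?L and pq: "p < q \<and> q < length w \<and> w ! p = w ! q"
  obtain r where "Suc p < r" "r < Suc q" "R ((s # w) ! r) (w ! p)"
    using L[rule_format, of "Suc p" "Suc q"] pq by auto
  then show "\<exists>r. p < r \<and> r < q \<and> R (w ! r) (w ! p)"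
    by (cases r) auto
next
  fix p q assume R: "?R1 \<and> ?R2" and pq: "p < q \<and> q < length (s # w) \<and> (s # w) ! p = (s # w) ! q"
  then obtain q' where q: "q = Suc q'"
    by (cases q) auto
  show "\<exists>r. p < r \<and> r < q \<and> R ((s # w) ! r) ((s # w) ! p)"
  proof (cases p)
    case 0
    then obtain r where "r < q'" "R (w ! r) s"
      using R pq q by auto
    with 0 q show ?thesis
      by (intro exI[of _ "Suc r"]) auto
  next
    case (Suc p')
    then obtain r where "p' < r" "r < q'" "R (w ! r) (w ! p')"
      using R[THEN conjunct2, rule_format, of p' q'] pq q by auto
    with Suc q show ?thesis
      by (intro exI[of _ "Suc r"]) auto
  qed
qed

lemma separated_iff_nth:
  assumes "symp adj"
  shows "separated adj w \<longleftrightarrow>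
    (\<forall>p q. p < q \<and> q < length w \<and> w ! p = w ! q \<longrightarrow> (\<exists>r. p < r \<and> r < q \<and> adj (w ! r) (w ! p)))"
proof (induction w)
  case (Cons s w)
  then show ?case
    unfolding between_nth_Cons_iff by (simp add: not_exposed_iff_nth[OF assms])
qed simp

lemma not_separated_split:
  "\<not> separated adj w \<Longrightarrow>
    \<exists>X c Y Z. w = X @ c # Y @ c # Z \<and> (\<forall>y\<in>set Y. \<not> closed_nbhd adj c y)"
proof (induction w)
  case (Cons s w)
  show ?case
  proof (cases "exposed adj s w")
    case True
    then show ?thesis
      by (metis append_Nil exposed_iff_split)
  next
    case False
    with Cons obtain X c Y Z where "w = X @ c # Y @ c # Z" "\<forall>y\<in>set Y. \<not> closed_nbhd adj c y"
      by auto
    then show ?thesis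
      by (metis append_Cons)
  qed
qed simp

definition act :: "('v \<Rightarrow> 'v \<Rightarrow> bool) \<Rightarrow> 'v \<Rightarrow> 'v list \<Rightarrow> 'v list" where
  "act adj s w = (if exposed adj s w then remove1 s w else s # w)"

lemma exposed_remove_other:
  "\<not> closed_nbhd adj u s \<Longrightarrow> exposed adj u (us @ s # vs) \<longleftrightarrow> exposed adj u (us @ vs)"
  by (simp add: exposed_def)

lemma separated_remove:
  assumes "symp adj" and "\<forall>u\<in>set us. \<not> closed_nbhd adj s u" and "separated adj (us @ s # vs)"
  shows "separated adj (us @ vs)"
  using assms(2,3)
proof (induction us)
  case (Cons u us)
  then have "\<not> closed_nbhd adj u s"
    using closed_nbhd_commute[OF assms(1)] by auto
  with Cons show ?case
    by (simp add: exposed_remove_other)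
qed simp

lemma remove1_exposed:
  assumes "exposed adj s w"
  obtains us vs where "w = us @ s # vs" "remove1 s w = us @ vs"
    and "\<forall>u\<in>set us. \<not> closed_nbhd adj s u"
proof -
  obtain us vs where "w = us @ s # vs" "\<forall>u\<in>set us. \<not> closed_nbhd adj s u"
    using assms by (auto simp: exposed_iff_split)
  moreover from this have "s \<notin> set us"
    by auto
  ultimately show ?thesis
    using that by (simp add: remove1_append)
qed

lemma separated_act:
  assumes "symp adj" and "separated adj w"
  shows "separated adj (act adj s w)"
proof (cases "exposed adj s w")
  case True
  then obtain us vs where "w = us @ s # vs" "remove1 s w = us @ vs"
    and "\<forall>u\<in>set us. \<not> closed_nbhd adj s u"
    by (rule remove1_exposed)
  with True assms show ?thesis
    by (simp add: act_def separated_remove)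
next
  case False
  with assms show ?thesis
    by (simp add: act_def)
qed

definition proj :: "'v list \<Rightarrow> 'v \<Rightarrow> 'v \<Rightarrow> 'v list" where
  "proj w a b = filter (\<lambda>x. x = a \<or> x = b) w"

text \<open>Commuting non-adjacent letters preserves the projection onto every pair of letters that
  are equal or adjacent; the pairs \<open>a = b\<close> record multiplicities.\<close>

definition proj_equiv :: "('v \<Rightarrow> 'v \<Rightarrow> bool) \<Rightarrow> 'v list \<Rightarrow> 'v list \<Rightarrow> bool" where
  "proj_equiv adj w w' \<longleftrightarrow> (\<forall>a b. closed_nbhd adj a b \<longrightarrow> proj w a b = proj w' a b)"

lemma equivp_proj_equiv: "equivp (proj_equiv adj)"
  by (auto intro!: equivpI reflpI sympI transpI simp: proj_equiv_def)

lemma proj_commute: "proj w a b = proj w b a"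
  unfolding proj_def by (metis disj_commute)

lemma exposed_iff_proj:
  "exposed adj s w \<longleftrightarrow> (\<forall>b. closed_nbhd adj s b \<longrightarrow> (\<exists>t. proj w s b = s # t))"
proof
  assume "exposed adj s w"
  then obtain us vs where w: "w = us @ s # vs" and us: "\<forall>u\<in>set us. \<not> closed_nbhd adj s u"
    by (auto simp: exposed_iff_split)
  have "proj w s b = s # proj vs s b" if "closed_nbhd adj s b" for b
    using w us that unfolding proj_def by (auto simp: filter_empty_conv)
  then show "\<forall>b. closed_nbhd adj s b \<longrightarrow> (\<exists>t. proj w s b = s # t)"
    by blast
next
  assume heads: "\<forall>b. closed_nbhd adj s b \<longrightarrow> (\<exists>t. proj w s b = s # t)"
  then obtain t where "proj w s s = s # t"
    using heads[rule_format, OF closed_nbhd_refl] by blast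
  then have "s \<in> set (proj w s s)"
    by simp
  then have "s \<in> set w"
    by (simp add: proj_def)
  then have "s \<in> set (filter (closed_nbhd adj s) w)"
    by simp
  then obtain h L where "filter (closed_nbhd adj s) w = h # L"
    by (cases "filter (closed_nbhd adj s) w") auto
  then obtain us vs where w: "w = us @ h # vs" and us: "\<forall>u\<in>set us. \<not> closed_nbhd adj s u"
    and h: "closed_nbhd adj s h"
    by (auto simp: filter_eq_Cons_iff)
  have "proj w s h = h # proj vs s h"
    using w us h unfolding proj_def by (auto simp: filter_empty_conv)
  with heads h have "h = s"
    by fastforce
  with w us show "exposed adj s w"
    by (auto simp: exposed_iff_split)
qed

lemma exposed_proj_Cons:
  assumes "symp adj" and "exposed adj s w" and "closed_nbhd adj a b" and "s = a \<or> s = b"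
  shows "\<exists>t. proj w a b = s # t"
proof (cases "s = a")
  case True
  with assms(2,3) show ?thesis
    by (simp add: exposed_iff_proj)
next
  case False
  with assms(4) have "s = b"
    by simp
  with assms(1,3) have "closed_nbhd adj s a"
    by (simp add: closed_nbhd_commute)
  with assms(2) \<open>s = b\<close> show ?thesis
    by (simp add: exposed_iff_proj proj_commute[of w a])
qed

lemma proj_act:
  "proj (act adj s w) a b =
    (if s = a \<or> s = b then (if exposed adj s w then remove1 s (proj w a b) else s # proj w a b)
     else proj w a b)"
  by (auto simp: act_def proj_def filter_remove1 remove1_idem)

lemma proj_equiv_act:
  assumes "proj_equiv adj w w'"
  shows "proj_equiv adj (act adj s w) (act adj s w')"
proof -
  have "exposed adj s w \<longleftrightarrow> exposed adj s w'"
    using assms by (simp add: exposed_iff_proj proj_equiv_def)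
  with assms show ?thesis
    by (simp add: proj_equiv_def proj_act)
qed

lemma act_act:
  assumes "symp adj" and "separated adj w"
  shows "proj_equiv adj (act adj s (act adj s w)) w"
proof (cases "exposed adj s w")
  case True
  then obtain us vs where w: "w = us @ s # vs" "remove1 s w = us @ vs"
    and us: "\<forall>u\<in>set us. \<not> closed_nbhd adj s u"
    by (rule remove1_exposed)
  have "\<not> exposed adj s vs"
    using assms(2) separated_appendD[of adj us "s # vs"] w by simp
  then have "\<not> exposed adj s (us @ vs)"
    using us by (simp add: exposed_def)
  with True w have act2: "act adj s (act adj s w) = s # remove1 s w"
    by (simp add: act_def)
  have "proj (s # remove1 s w) a b = proj w a b" if ab: "closed_nbhd adj a b" for a b
  proof (cases "s = a \<or> s = b")
    case True
    then obtain t where "proj w a b = s # t"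
      using exposed_proj_Cons[OF assms(1) \<open>exposed adj s w\<close> ab] by blast
    with True show ?thesis
      by (auto simp: proj_def filter_remove1)
  next
    case False
    then show ?thesis
      by (auto simp: proj_def filter_remove1 remove1_idem)
  qed
  with act2 show ?thesis
    by (simp add: proj_equiv_def)
next
  case False
  then show ?thesis
    by (simp add: act_def proj_equiv_def)
qed

lemma exposed_act_other:
  "\<not> closed_nbhd adj s t \<Longrightarrow> exposed adj s (act adj t w) \<longleftrightarrow> exposed adj s w"
  by (simp add: act_def exposed_def filter_remove1 remove1_idem)

lemma act_commute:
  assumes "symp adj" and "s \<noteq> t" and "\<not> adj s t"
  shows "proj_equiv adj (act adj s (act adj t w)) (act adj t (act adj s w))"
proof -
  have "\<not> closed_nbhd adj s t" "\<not> closed_nbhd adj t s"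
    using assms by (auto simp: closed_nbhd_def dest: sympD)
  moreover have "\<not> ((s = a \<or> s = b) \<and> (t = a \<or> t = b))" if "closed_nbhd adj a b" for a b
    using that assms by (auto simp: closed_nbhd_def dest: sympD)
  ultimately show ?thesis
    unfolding proj_equiv_def by (auto simp: proj_act exposed_act_other)
qed

definition normal_form :: "('v \<Rightarrow> 'v \<Rightarrow> bool) \<Rightarrow> 'v list \<Rightarrow> 'v list" where
  "normal_form adj u = foldr (act adj) u []"

lemma normal_form_simps [simp]:
  "normal_form adj [] = []"
  "normal_form adj (s # u) = act adj s (normal_form adj u)"
  by (simp_all add: normal_form_def)

lemma separated_normal_form: "symp adj \<Longrightarrow> separated adj (normal_form adj u)"
  by (induction u) (simp_all add: separated_act)

lemma length_normal_form_le: "length (normal_form adj u) \<le> length u"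
proof (induction u)
  case (Cons s u)
  then show ?case
    by (auto simp: act_def length_remove1)
qed simp

lemma normal_form_separated: "separated adj w \<Longrightarrow> normal_form adj w = w"
  by (induction w) (simp_all add: act_def)

lemma proj_equiv_length:
  assumes "proj_equiv adj w w'"
  shows "length w = length w'"
proof -
  have "proj w a a = proj w' a a" for a
    using assms by (simp add: proj_equiv_def)
  moreover have "proj u a a = filter ((=) a) u" for a :: 'v and u
    by (induction u) (auto simp: proj_def)
  ultimately have "filter ((=) a) w = filter ((=) a) w'" for a
    by metis
  then have "mset w = mset w'"
    by (simp add: multiset_eq_iff count_mset count_list_eq_length_filter)
  then show ?thesis
    by (metis size_mset)
qed

lemma proj_equiv_foldr_act:
  "proj_equiv adj w w' \<Longrightarrow> proj_equiv adj (foldr (act adj) u w) (foldr (act adj) u w')"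
  by (induction u) (simp_all add: proj_equiv_act)

lemma rel_step_normal_form:
  assumes "symp adj" and "rel_step V adj G x y"
  shows "proj_equiv adj (normal_form adj x) (normal_form adj y)"
  using assms(2)
proof cases
  case (R1 u i v)
  have "proj_equiv adj (act adj i (act adj i (normal_form adj v))) (normal_form adj v)"
    using act_act[OF assms(1) separated_normal_form[OF assms(1)]] .
  with R1 show ?thesis
    by (simp add: normal_form_def proj_equiv_foldr_act)
next
  case (R2 i j u v)
  have "proj_equiv adj (act adj i (act adj j (normal_form adj v))) (act adj j (act adj i (normal_form adj v)))"
    using act_commute[OF assms(1) _ \<open>\<not> adj i j\<close>] by (cases "i = j") (simp_all add: proj_equiv_def)
  with R2 show ?thesis
    by (simp add: normal_form_def proj_equiv_foldr_act)
qed

lemma same_morphism_normal_form: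
  assumes "symp adj" and "same_morphism V adj G x y"
  shows "proj_equiv adj (normal_form adj x) (normal_form adj y)"
  using assms(2) unfolding same_morphism_def
proof (induction rule: rtranclp_induct)
  case base
  show ?case
    using equivp_reflp[OF equivp_proj_equiv] .
next
  case (step y z)
  then have "proj_equiv adj (normal_form adj y) (normal_form adj z)"
    using rel_step_normal_form[OF assms(1)] equivp_symp[OF equivp_proj_equiv] by blast
  with step.IH show ?case
    using equivp_transp[OF equivp_proj_equiv] by blast
qed

lemma separated_length_le:
  assumes "symp adj" and "separated adj w" and "same_morphism V adj G w w'"
  shows "length w \<le> length w'"
proof -
  have "length w = length (normal_form adj w')"
    using proj_equiv_length[OF same_morphism_normal_form[OF assms(1,3)]]
    by (simp add: normal_form_separated[OF assms(2)])
  also have "\<dots> \<le> length w'"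
    by (rule length_normal_form_le)
  finally show ?thesis .
qed

text \<open>Weaker than being an orientation, but preserved by reflections and enough to make
  reflections at non-adjacent vertices commute.\<close>

definition arrows_on_edges :: "('v \<Rightarrow> 'v \<Rightarrow> bool) \<Rightarrow> ('v \<times> 'v) set \<Rightarrow> bool" where
  "arrows_on_edges adj H \<longleftrightarrow> (\<forall>a b. (a, b) \<in> H \<longrightarrow> adj a b)"

lemma arrows_on_edges_run:
  assumes "symp adj" and "arrows_on_edges adj H" and "run V H xs = Some H'"
  shows "arrows_on_edges adj H'"
  using assms(2,3)
proof (induction xs arbitrary: H)
  case (Cons i xs)
  have "arrows_on_edges adj (reflect i H)"
    using Cons.prems(1) assms(1) by (auto simp: arrows_on_edges_def reflect_def dest: sympD)
  with Cons show ?case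
    by (auto split: if_splits)
qed simp

lemma run_append: "run V H (xs @ ys) = Option.bind (run V H xs) (\<lambda>H'. run V H' ys)"
  by (induction xs arbitrary: H) auto

lemma reflect_reflect [simp]: "reflect i (reflect i H) = H"
  by (auto simp: reflect_def)

lemma run_Cons_Cons_same:
  "run V H (c # c # xs) = (if is_source V H c \<or> is_sink V H c then run V H xs else None)"
proof -
  have "is_source V H c \<or> is_sink V H c \<Longrightarrow> is_source V (reflect c H) c \<or> is_sink V (reflect c H) c"
    by (auto simp: is_source_def is_sink_def reflect_def)
  then show ?thesis
    by auto
qed

lemma run_swap:
  assumes "arrows_on_edges adj H" and "a \<noteq> b" and "\<not> adj a b" and "\<not> adj b a"
  shows "run V H (a # b # xs) = run V H (b # a # xs)"
proof -
  have "is_source V (reflect b H) a = is_source V H a" "is_sink V (reflect b H) a = is_sink V H a"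
    "is_source V (reflect a H) b = is_source V H b" "is_sink V (reflect a H) b = is_sink V H b"
    using assms by (auto simp: arrows_on_edges_def is_source_def is_sink_def reflect_def)
  moreover have "reflect a (reflect b H) = reflect b (reflect a H)"
    using assms by (auto simp: arrows_on_edges_def reflect_def)
  ultimately show ?thesis
    by auto
qed

lemma composable_swap:
  assumes "symp adj" and "arrows_on_edges adj G" and "a \<noteq> b" and "\<not> adj a b"
  shows "composable V G (u @ [a, b] @ v) \<longleftrightarrow> composable V G (u @ [b, a] @ v)"
proof (cases "run V G (rev v)")
  case (Some H)
  have "\<not> adj b a"
    using assms(1,4) by (auto dest: sympD)
  moreover have "arrows_on_edges adj H"
    using arrows_on_edges_run[OF assms(1,2) Some] .
  ultimately have "run V H (b # a # rev u) = run V H (a # b # rev u)"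
    using run_swap[of adj H b a] assms(3,4) by simp
  with Some show ?thesis
    by (simp add: composable_def run_append)
qed (simp add: composable_def run_append)

lemma composable_cancel: "composable V G (u @ [c, c] @ v) \<Longrightarrow> composable V G (u @ v)"
  by (cases "run V G (rev v)") (auto simp: composable_def run_append run_Cons_Cons_same split: if_splits)

lemma same_morphism_move_left:
  assumes "symp adj" and "arrows_on_edges adj G" and "\<forall>y\<in>set Y. \<not> closed_nbhd adj c y"
    and "composable V G (X @ Y @ c # Z)"
  shows "composable V G (X @ c # Y @ Z) \<and> same_morphism V adj G (X @ Y @ c # Z) (X @ c # Y @ Z)"
  using assms(3,4)
proof (induction Y arbitrary: Z rule: rev_induct)
  case Nil
  then show ?case
    by (simp add: same_morphism_def)
next
  case (snoc y Y)
  have "y \<noteq> c" "\<not> adj y c"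
    using snoc.prems(1) assms(1) by (auto simp: closed_nbhd_def dest: sympD)
  moreover have unswapped: "composable V G ((X @ Y) @ [y, c] @ Z)"
    using snoc.prems(2) by simp
  ultimately have swapped: "composable V G ((X @ Y) @ [c, y] @ Z)"
    using composable_swap[OF assms(1,2)] by blast
  have step: "rel_step V adj G ((X @ Y) @ [y, c] @ Z) ((X @ Y) @ [c, y] @ Z)"
    using \<open>\<not> adj y c\<close> unswapped swapped by (rule rel_step.R2)
  have "composable V G (X @ c # Y @ y # Z) \<and>
      same_morphism V adj G (X @ Y @ c # y # Z) (X @ c # Y @ y # Z)"
    using snoc.IH snoc.prems(1) swapped by simp
  with step show ?case
    unfolding same_morphism_def by (auto intro: converse_rtranclp_into_rtranclp)
qed

lemma not_separated_shorten:
  assumes "symp adj" and "arrows_on_edges adj G" and "composable V G w" and "\<not> separated adj w"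
  obtains w' where "composable V G w'" and "same_morphism V adj G w w'" and "length w' < length w"
proof -
  obtain X c Y Z where w: "w = X @ c # Y @ c # Z" and Y: "\<forall>y\<in>set Y. \<not> closed_nbhd adj c y"
    using not_separated_split[OF assms(4)] by blast
  have "composable V G ((X @ [c]) @ c # Y @ Z)"
    and moved: "same_morphism V adj G w ((X @ [c]) @ c # Y @ Z)"
    using same_morphism_move_left[OF assms(1,2) Y, where X = "X @ [c]"] assms(3) w by simp_all
  then have "composable V G (X @ [c, c] @ Y @ Z)"
    by simp
  moreover from this have "composable V G (X @ Y @ Z)"
    by (rule composable_cancel)
  ultimately have "rel_step V adj G (X @ [c, c] @ Y @ Z) (X @ Y @ Z)"
    by (rule rel_step.R1)
  with moved have "same_morphism V adj G w (X @ Y @ Z)"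
    unfolding same_morphism_def by (simp add: rtranclp.rtrancl_into_rtrancl)
  with \<open>composable V G (X @ Y @ Z)\<close> show ?thesis
    using that w by simp
qed

theorem mainTheorem15:
  fixes V :: "'v set" and adj :: "'v \<Rightarrow> 'v \<Rightarrow> bool"
    and G :: "('v \<times> 'v) set" and w :: "'v list"
  assumes "finite_tree V adj"
    and "orientation adj G"
    and "composable V G w"
  shows "reduced V adj G w \<longleftrightarrow>
    (\<forall>p q. p < q \<and> q < length w \<and> w ! p = w ! q \<longrightarrow>
       (\<exists>r. p < r \<and> r < q \<and> adj (w ! r) (w ! p)))"
proof -
  have sym: "symp adj"
    using assms(1) by (auto simp: finite_tree_def intro: sympI)
  have edges: "arrows_on_edges adj G"
    using assms(2) by (simp add: orientation_def arrows_on_edges_def)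
  have "reduced V adj G w \<longleftrightarrow> separated adj w"
  proof
    assume "reduced V adj G w"
    show "separated adj w"
    proof (rule ccontr)
      assume "\<not> separated adj w"
      then obtain w' where "composable V G w'" "same_morphism V adj G w w'" "length w' < length w"
        by (rule not_separated_shorten[OF sym edges assms(3)])
      with \<open>reduced V adj G w\<close> show False
        unfolding reduced_def by (meson not_le)
    qed
  next
    assume "separated adj w"
    then show "reduced V adj G w"
      using assms(3) separated_length_le[OF sym] by (auto simp: reduced_def)
  qed
  then show ?thesis
    using separated_iff_nth[OF sym] by simp
qed

end
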